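(* Let $M$ be a minimal dominating set of a finite tree $T$ and let $v\in a_1(M)$. Let $N=N[v]\cap N_1(M)$ and $M_0=(M\setminus\{v\})\cup N$. Then Algorithm 1 (described below), applied to $T$ rooted at $v$ and the set $M_0$, outputs a minimal dominating set $M_i$ with $|M_i|\ge|M_0|\ge|M|$. Algorithm 1: set $i=0$; while $M_i$ is not a minimal dominating set: choose a supported vertex $u_i\in M_i\setminus a(M_i)$ of least depth; let $A_{i+1}$ be the set of vertices of $a_1(M_i)$ adjacent to $u_i$; let $N_{i+1}$ be the set of vertices of $N_1(M_i)$ adjacent to a vertex of $A_{i+1}$; set $M_{i+1}=(M_i\setminus A_{i+1})\cup N_{i+1}$ and increase $i$ by one. When the loop ends, return $M_i$.
   Context: A dominating set of a graph $G=(V,E)$ is a set $S\subseteq V$ such that every vertex is in $S$ or adjacent to a vertex of $S$; it is minimal if no proper subset is dominating. $N[u]=N(u)\cup\{u\}$ is the closed neighbourhood. For a dominating set $S$: $a(S)=\{u\in S: S\setminus\{u\}\text{ is not dominating}\}$ (critical vertices); vertices of $S\setminus a(S)$ are called supported; $N_1(S)=\{u\in V\setminus S: |N[u]\cap S|=1\}$; $a_1(S)=\{u\in a(S): N[u]\cap N_1(S)\ne\emptyset\}$. In a tree rooted at $v$, depth of a vertex is its distance to $v$. *)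

theory Defs
  imports Main
begin

definition simple_graph :: "'a set \<Rightarrow> ('a \<Rightarrow> 'a \<Rightarrow> bool) \<Rightarrow> bool" where
  "simple_graph V E \<longleftrightarrow> (\<forall>x y. E x y \<longrightarrow> x \<in> V \<and> y \<in> V \<and> x \<noteq> y \<and> E y x)"

definition connected_graph :: "'a set \<Rightarrow> ('a \<Rightarrow> 'a \<Rightarrow> bool) \<Rightarrow> bool" where
  "connected_graph V E \<longleftrightarrow> (\<forall>x\<in>V. \<forall>y\<in>V. E\<^sup>*\<^sup>* x y)"

definition is_cycle :: "('a \<Rightarrow> 'a \<Rightarrow> bool) \<Rightarrow> 'a list \<Rightarrow> bool" where
  "is_cycle E cs \<longleftrightarrow> length cs \<ge> 3 \<and> distinct cs
     \<and> (\<forall>i. Suc i < length cs \<longrightarrow> E (cs ! i) (cs ! Suc i))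
     \<and> E (last cs) (hd cs)"

definition is_tree :: "'a set \<Rightarrow> ('a \<Rightarrow> 'a \<Rightarrow> bool) \<Rightarrow> bool" where
  "is_tree V E \<longleftrightarrow> finite V \<and> V \<noteq> {} \<and> simple_graph V E \<and> connected_graph V E
     \<and> (\<nexists>cs. is_cycle E cs)"

definition cnbhd :: "('a \<Rightarrow> 'a \<Rightarrow> bool) \<Rightarrow> 'a \<Rightarrow> 'a set" where
  "cnbhd E u = {w. w = u \<or> E u w}"

definition dominating :: "'a set \<Rightarrow> ('a \<Rightarrow> 'a \<Rightarrow> bool) \<Rightarrow> 'a set \<Rightarrow> bool" where
  "dominating V E S \<longleftrightarrow> S \<subseteq> V \<and> (\<forall>x\<in>V. x \<in> S \<or> (\<exists>s\<in>S. E x s))"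

definition minimal_dominating :: "'a set \<Rightarrow> ('a \<Rightarrow> 'a \<Rightarrow> bool) \<Rightarrow> 'a set \<Rightarrow> bool" where
  "minimal_dominating V E S \<longleftrightarrow> dominating V E S \<and> (\<forall>S'. S' \<subset> S \<longrightarrow> \<not> dominating V E S')"

definition crit :: "'a set \<Rightarrow> ('a \<Rightarrow> 'a \<Rightarrow> bool) \<Rightarrow> 'a set \<Rightarrow> 'a set" where
  "crit V E S = {u \<in> S. \<not> dominating V E (S - {u})}"

definition N1 :: "'a set \<Rightarrow> ('a \<Rightarrow> 'a \<Rightarrow> bool) \<Rightarrow> 'a set \<Rightarrow> 'a set" where
  "N1 V E S = {u \<in> V - S. card (cnbhd E u \<inter> S) = 1}"

definition a1 :: "'a set \<Rightarrow> ('a \<Rightarrow> 'a \<Rightarrow> bool) \<Rightarrow> 'a set \<Rightarrow> 'a set" where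
  "a1 V E S = {u \<in> crit V E S. cnbhd E u \<inter> N1 V E S \<noteq> {}}"

definition gdist :: "('a \<Rightarrow> 'a \<Rightarrow> bool) \<Rightarrow> 'a \<Rightarrow> 'a \<Rightarrow> nat" where
  "gdist E v u = (LEAST n. (E ^^ n) v u)"

definition alg_step :: "'a set \<Rightarrow> ('a \<Rightarrow> 'a \<Rightarrow> bool) \<Rightarrow> 'a \<Rightarrow> 'a set \<Rightarrow> 'a set \<Rightarrow> bool" where
  "alg_step V E v Mi Mi' \<longleftrightarrow> \<not> minimal_dominating V E Mi \<and>
     (\<exists>u. u \<in> Mi - crit V E Mi \<and> (\<forall>u' \<in> Mi - crit V E Mi. gdist E v u \<le> gdist E v u') \<and>
        (let A = {a \<in> a1 V E Mi. E a u};
             N = {w \<in> N1 V E Mi. \<exists>a\<in>A. E w a}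
         in Mi' = (Mi - A) \<union> N))"

end

(*
  Root T at v. Since T has no cycle, every edge joins a vertex to its parent in the
  breadth-first layering from v. The algorithm keeps the invariant that every supported
  vertex of the current set S has its parent outside S; then the S-neighbours of a
  supported vertex u are children of u lying in a1(S), so the step at u exchanges a set
  A of vertices of a1(S) whose parents stay in S for the set N of their neighbours in
  N1(S), which are children of A. Such an exchange keeps S dominating, does not decrease
  |S| (distinct vertices of A have disjoint private neighbourhoods in N1(S)) and keeps
  the invariant. The initial set M0 is the exchange of {v} in M, for which the invariant
  holds trivially. Each step replaces vertices by deeper ones, so the multiset of heights
  decreases and the algorithm stops, which can only happen at a minimal dominating set.
*)

theory Submission
  imports Defs "HOL-Library.Multiset"
begin

lemma simple_graph_edgeD:
  assumes "simple_graph V E" "E x y"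
  shows "x \<in> V" "y \<in> V" "x \<noteq> y" "E y x"
  using assms unfolding simple_graph_def by blast+

lemma cnbhd_Int_eq_singletonD:
  assumes "cnbhd E y \<inter> S = {x}"
  shows "x \<in> S" "x = y \<or> E y x" "\<And>w. w \<in> S \<Longrightarrow> w = y \<or> E y w \<Longrightarrow> w = x"
  using assms unfolding cnbhd_def by auto

lemma cnbhd_Int_eq_singletonI:
  assumes "x \<in> S" "x = y \<or> E y x" "\<And>w. w \<in> S \<Longrightarrow> w = y \<or> E y w \<Longrightarrow> w = x"
  shows "cnbhd E y \<inter> S = {x}"
  using assms unfolding cnbhd_def by blast

lemma private_neighbour_imp_crit:
  assumes "y \<in> V" "cnbhd E y \<inter> S = {x}"
  shows "x \<in> crit V E S"
proof -
  have "y \<notin> S - {x}" "\<forall>s\<in>S - {x}. \<not> E y s"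
    using cnbhd_Int_eq_singletonD(3)[OF assms(2)] by auto
  then show ?thesis
    using assms(1) cnbhd_Int_eq_singletonD(1)[OF assms(2)]
    unfolding crit_def dominating_def by blast
qed

lemma crit_imp_private_neighbour:
  assumes "dominating V E S" "x \<in> crit V E S"
  obtains y where "y \<in> V" "cnbhd E y \<inter> S = {x}"
proof -
  have "x \<in> S" "S - {x} \<subseteq> V"
    using assms unfolding crit_def dominating_def by auto
  then obtain y where y: "y \<in> V" "y \<notin> S - {x}" "\<forall>s\<in>S - {x}. \<not> E y s"
    using assms(2) unfolding crit_def dominating_def by blast
  have "y \<in> S \<or> (\<exists>s\<in>S. E y s)"
    using assms(1) y(1) unfolding dominating_def by blast
  then have "x = y \<or> E y x"
    using y(2,3) by blast
  then have "cnbhd E y \<inter> S = {x}"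
    using y(2,3) \<open>x \<in> S\<close> by (intro cnbhd_Int_eq_singletonI) auto
  with y(1) show thesis
    by (rule that)
qed

lemma N1_iff: "y \<in> N1 V E S \<longleftrightarrow> y \<in> V - S \<and> (\<exists>x. cnbhd E y \<inter> S = {x})"
  unfolding N1_def by (simp add: card_1_singleton_iff)

lemma a1_iff:
  assumes "simple_graph V E"
  shows "x \<in> a1 V E S \<longleftrightarrow> x \<in> S \<and> (\<exists>y\<in>N1 V E S. E x y)"
proof
  assume "x \<in> a1 V E S"
  then obtain w where "x \<in> S" "w \<in> cnbhd E x" "w \<in> N1 V E S"
    unfolding a1_def crit_def by blast
  moreover from this have "w \<noteq> x"
    unfolding N1_def by blast
  ultimately show "x \<in> S \<and> (\<exists>y\<in>N1 V E S. E x y)"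
    unfolding cnbhd_def by blast
next
  assume "x \<in> S \<and> (\<exists>y\<in>N1 V E S. E x y)"
  then obtain y where x: "x \<in> S" and y: "y \<in> N1 V E S" "E x y"
    by blast
  then obtain z where "y \<in> V" and yz: "cnbhd E y \<inter> S = {z}"
    unfolding N1_iff by blast
  have "x = z"
    using cnbhd_Int_eq_singletonD(3)[OF yz x] simple_graph_edgeD(4)[OF assms y(2)] by blast
  then have "x \<in> crit V E S"
    using private_neighbour_imp_crit[OF \<open>y \<in> V\<close>] yz by blast
  moreover have "y \<in> cnbhd E x"
    using y(2) unfolding cnbhd_def by simp
  ultimately show "x \<in> a1 V E S"
    using y(1) unfolding a1_def by blast
qed

lemma a1_subset: "a1 V E S \<subseteq> S"
  unfolding a1_def crit_def by blast

lemma crit_adjacent_imp_a1: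
  assumes "simple_graph V E" "dominating V E S" "x \<in> crit V E S" "s \<in> S" "E x s"
  shows "x \<in> a1 V E S"
proof -
  obtain y where "y \<in> V" and y: "cnbhd E y \<inter> S = {x}"
    using crit_imp_private_neighbour assms(2,3) by metis
  have "y \<noteq> x"
    using cnbhd_Int_eq_singletonD(3)[OF y assms(4)] assms(5)
      simple_graph_edgeD(3)[OF assms(1,5)] by metis
  then have "y \<notin> S" "E y x"
    using cnbhd_Int_eq_singletonD(2,3)[OF y] by blast+
  then have "y \<in> N1 V E S"
    unfolding N1_iff using \<open>y \<in> V\<close> y by blast
  then show ?thesis
    using a1_iff[OF assms(1)] simple_graph_edgeD(4)[OF assms(1) \<open>E y x\<close>]
      cnbhd_Int_eq_singletonD(1)[OF y] by blast
qed

lemma minimal_dominating_crit: "minimal_dominating V E S \<Longrightarrow> crit V E S = S"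
  unfolding minimal_dominating_def crit_def by auto

lemma dominating_mono:
  "dominating V E T \<Longrightarrow> T \<subseteq> S \<Longrightarrow> S \<subseteq> V \<Longrightarrow> dominating V E S"
  unfolding dominating_def by blast

lemma not_minimal_imp_supported:
  assumes "dominating V E S" "\<not> minimal_dominating V E S"
  shows "S - crit V E S \<noteq> {}"
proof -
  obtain T x where T: "dominating V E T" "T \<subseteq> S - {x}" and "x \<in> S"
    using assms unfolding minimal_dominating_def by blast
  moreover have "S - {x} \<subseteq> V"
    using assms(1) unfolding dominating_def by blast
  ultimately have "x \<in> S - crit V E S"
    using dominating_mono[OF T] unfolding crit_def by blast
  then show ?thesis
    by blast
qed

lemma supported_has_neighbour:
  assumes "dominating V E S" "x \<in> S - crit V E S"
  obtains s where "s \<in> S" "E x s"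
proof -
  have "x \<in> V" "dominating V E (S - {x})"
    using assms unfolding crit_def dominating_def by auto
  then show thesis
    using that unfolding dominating_def by blast
qed

definition N1_adj :: "'a set \<Rightarrow> ('a \<Rightarrow> 'a \<Rightarrow> bool) \<Rightarrow> 'a set \<Rightarrow> 'a set \<Rightarrow> 'a set" where
  "N1_adj V E S A = {w \<in> N1 V E S. \<exists>a\<in>A. E w a}"

definition exchange :: "'a set \<Rightarrow> ('a \<Rightarrow> 'a \<Rightarrow> bool) \<Rightarrow> 'a set \<Rightarrow> 'a set \<Rightarrow> 'a set" where
  "exchange V E S A = (S - A) \<union> N1_adj V E S A"

lemma N1_adj_disjoint: "N1_adj V E S A \<inter> S = {}"
  unfolding N1_adj_def N1_iff by blast

lemma exchange_singleton:
  assumes "simple_graph V E" "v \<in> M"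
  shows "exchange V E M {v} = (M - {v}) \<union> (cnbhd E v \<inter> N1 V E M)"
proof -
  have "cnbhd E v \<inter> N1 V E M = N1_adj V E M {v}"
  proof (rule set_eqI)
    fix w
    have "w \<in> N1 V E M \<Longrightarrow> w \<noteq> v"
      using assms(2) unfolding N1_def by blast
    then show "w \<in> cnbhd E v \<inter> N1 V E M \<longleftrightarrow> w \<in> N1_adj V E M {v}"
      unfolding N1_adj_def cnbhd_def using simple_graph_edgeD(4)[OF assms(1)] by blast
  qed
  then show ?thesis
    unfolding exchange_def by simp
qed

lemma card_a1_le_card_N1_adj:
  assumes "simple_graph V E" "finite V" "A \<subseteq> a1 V E S"
  shows "card A \<le> card (N1_adj V E S A)"
proof -
  have "\<exists>w. w \<in> N1_adj V E S A \<and> E a w" if "a \<in> A" for a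
  proof -
    have "a \<in> a1 V E S"
      using that assms(3) by blast
    then obtain w where "w \<in> N1 V E S" "E a w"
      unfolding a1_iff[OF assms(1)] by blast
    then show ?thesis
      unfolding N1_adj_def using that simple_graph_edgeD(4)[OF assms(1)] by blast
  qed
  then obtain f where f: "\<And>a. a \<in> A \<Longrightarrow> f a \<in> N1_adj V E S A \<and> E a (f a)"
    by metis
  have "A \<subseteq> S"
    using assms(3) a1_subset[of V E S] by blast
  have "inj_on f A"
  proof
    fix a b assume ab: "a \<in> A" "b \<in> A" "f a = f b"
    obtain z where z: "cnbhd E (f a) \<inter> S = {z}"
      using f[OF ab(1)] unfolding N1_adj_def N1_iff by blast
    have "E (f a) a" "E (f a) b"
      using f ab simple_graph_edgeD(4)[OF assms(1)] by metis+
    then have "a = z" "b = z"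
      using cnbhd_Int_eq_singletonD(3)[OF z] ab \<open>A \<subseteq> S\<close> by blast+
    then show "a = b"
      by simp
  qed
  moreover have "f ` A \<subseteq> N1_adj V E S A"
    using f by blast
  moreover have "N1_adj V E S A \<subseteq> V"
    unfolding N1_adj_def N1_iff by blast
  then have "finite (N1_adj V E S A)"
    using assms(2) finite_subset by blast
  ultimately show ?thesis
    by (rule card_inj_on_le)
qed

lemma is_cycle_map_upt:
  assumes "3 \<le> n" "inj_on c {0..<n}" "\<And>i. Suc i < n \<Longrightarrow> E (c i) (c (Suc i))"
    "E (c (n - 1)) (c 0)"
  shows "is_cycle E (map c [0..<n])"
proof -
  have "distinct (map c [0..<n])"
    using assms(2) by (simp add: distinct_map)
  moreover have "\<forall>i. Suc i < n \<longrightarrow> E (map c [0..<n] ! i) (map c [0..<n] ! Suc i)"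
    using assms(3) by simp
  moreover have "hd (map c [0..<n]) = c 0" "last (map c [0..<n]) = c (n - 1)"
    using assms(1) by (simp_all add: hd_map last_map)
  ultimately show ?thesis
    unfolding is_cycle_def using assms(1,4) by simp
qed

text \<open>If \<open>(p ^^ k) x = (p ^^ m) y\<close>, then \<open>ancestor_path p x y k m\<close> lists the walk from
  \<open>x\<close> up to this common ancestor and down again to \<open>y\<close>, at indices \<open>0..k+m\<close>.\<close>

definition ancestor_path :: "('a \<Rightarrow> 'a) \<Rightarrow> 'a \<Rightarrow> 'a \<Rightarrow> nat \<Rightarrow> nat \<Rightarrow> nat \<Rightarrow> 'a" where
  "ancestor_path p x y k m i = (if i \<le> k then (p ^^ i) x else (p ^^ (k + m - i)) y)"

locale rooted_layering =
  fixes V :: "'a set" and E :: "'a \<Rightarrow> 'a \<Rightarrow> bool" and r :: 'a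
    and p :: "'a \<Rightarrow> 'a" and dep :: "'a \<Rightarrow> nat"
  assumes simple: "simple_graph V E"
    and parent_edge: "\<And>x. x \<in> V \<Longrightarrow> x \<noteq> r \<Longrightarrow> E x (p x)"
    and dep_parent: "\<And>x. x \<in> V \<Longrightarrow> x \<noteq> r \<Longrightarrow> dep x = Suc (dep (p x))"
    and dep_eq_0_iff: "\<And>x. x \<in> V \<Longrightarrow> dep x = 0 \<longleftrightarrow> x = r"
begin

lemmas edge_in_V = simple_graph_edgeD(1,2)[OF simple]
lemmas edge_irrefl = simple_graph_edgeD(3)[OF simple]
lemmas edge_sym = simple_graph_edgeD(4)[OF simple]

lemma parent_in_V: "x \<in> V \<Longrightarrow> x \<noteq> r \<Longrightarrow> p x \<in> V"
  using edge_in_V parent_edge by blast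

lemma ancestor_in_V_dep:
  assumes "x \<in> V" "i \<le> dep x"
  shows "(p ^^ i) x \<in> V \<and> dep ((p ^^ i) x) = dep x - i"
  using assms(2)
proof (induction i)
  case 0
  then show ?case
    using assms(1) by simp
next
  case (Suc i)
  then have "(p ^^ i) x \<in> V" "dep ((p ^^ i) x) = dep x - i" "(p ^^ i) x \<noteq> r"
    using dep_eq_0_iff by fastforce+
  then show ?case
    using parent_in_V dep_parent by simp
qed

lemma ancestor_root: "x \<in> V \<Longrightarrow> (p ^^ dep x) x = r"
  using ancestor_in_V_dep[of x "dep x"] dep_eq_0_iff by (metis diff_self_eq_0 order_refl)

lemma ancestor_edge:
  assumes "x \<in> V" "i < dep x"
  shows "E ((p ^^ i) x) ((p ^^ Suc i) x)"
  using ancestor_in_V_dep[of x i] dep_eq_0_iff parent_edge assms by fastforce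

lemma ancestor_inj:
  assumes "x \<in> V" "i \<le> dep x" "j \<le> dep x" "(p ^^ i) x = (p ^^ j) x"
  shows "i = j"
  using ancestor_in_V_dep[OF assms(1,2)] ancestor_in_V_dep[OF assms(1,3)] assms(2-4) by simp

lemma ancestor_path_edge:
  assumes "x \<in> V" "y \<in> V" "k \<le> dep x" "m \<le> dep y" "(p ^^ k) x = (p ^^ m) y" "i < k + m"
  shows "E (ancestor_path p x y k m i) (ancestor_path p x y k m (Suc i))"
proof -
  consider "i < k" | "i = k" | "k < i"
    by linarith
  then show ?thesis
  proof cases
    case 1
    then show ?thesis
      unfolding ancestor_path_def using ancestor_edge assms(1,3) by simp
  next
    case 2
    then obtain j where j: "m = Suc j"
      using assms(6) by (cases m) simp_all
    then have "ancestor_path p x y k m i = (p ^^ Suc j) y"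
        "ancestor_path p x y k m (Suc i) = (p ^^ j) y"
      unfolding ancestor_path_def using 2 assms(5) by simp_all
    then show ?thesis
      using ancestor_edge[OF assms(2), of j] j assms(4) edge_sym by simp
  next
    case 3
    define j where "j = k + m - Suc i"
    have "k + m - i = Suc j" "j < dep y"
      using 3 assms(4,6) unfolding j_def by linarith+
    then have "ancestor_path p x y k m i = (p ^^ Suc j) y"
        "ancestor_path p x y k m (Suc i) = (p ^^ j) y"
      unfolding ancestor_path_def j_def using 3 by simp_all
    then show ?thesis
      using ancestor_edge[OF assms(2) \<open>j < dep y\<close>] edge_sym by simp
  qed
qed

lemma ancestor_path_inj:
  assumes "x \<in> V" "y \<in> V" "k \<le> dep x" "m \<le> dep y" "(p ^^ k) x = (p ^^ m) y"
    and first_meet: "\<And>i j. i < k \<Longrightarrow> j \<le> dep y \<Longrightarrow> (p ^^ i) x \<noteq> (p ^^ j) y"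
  shows "inj_on (ancestor_path p x y k m) {0..<Suc (k + m)}"
proof -
  let ?c = "ancestor_path p x y k m"
  have cross: "?c i \<noteq> ?c j" if "i \<le> k" "k < j" "j < Suc (k + m)" for i j
  proof -
    have "?c i = (p ^^ i) x" "?c j = (p ^^ (k + m - j)) y" "k + m - j < m"
      unfolding ancestor_path_def using that by auto
    moreover have "k + m - j \<le> dep y"
      using \<open>k + m - j < m\<close> assms(4) by linarith
    then have "(p ^^ k) x \<noteq> (p ^^ (k + m - j)) y"
      using ancestor_inj[OF assms(2,4)] assms(5) \<open>k + m - j < m\<close> by fastforce
    ultimately show ?thesis
      using first_meet[of i "k + m - j"] assms(4) \<open>i \<le> k\<close> by (cases "i < k") auto
  qed
  show ?thesis
  proof (rule inj_onI)
    fix i j assume ij: "i \<in> {0..<Suc (k + m)}" "j \<in> {0..<Suc (k + m)}" "?c i = ?c j"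
    then consider "i \<le> k" "j \<le> k" | "k < i" "k < j"
      using cross by (metis atLeastLessThan_iff not_le)
    then show "i = j"
    proof cases
      case 1
      then show ?thesis
        using ancestor_inj[OF assms(1)] ij(3) assms(3) unfolding ancestor_path_def by simp
    next
      case 2
      then have "(p ^^ (k + m - i)) y = (p ^^ (k + m - j)) y"
        using ij(3) unfolding ancestor_path_def by simp
      moreover have "k + m - i \<le> dep y" "k + m - j \<le> dep y"
        using 2 assms(4) by linarith+
      ultimately have "k + m - i = k + m - j"
        using ancestor_inj[OF assms(2)] by blast
      then show ?thesis
        using ij(1,2) by simp
    qed
  qed
qed

lemma edge_parent_or_cycle:
  assumes xy: "E x y" and not_parent: "\<not> (x \<noteq> r \<and> p x = y)" "\<not> (y \<noteq> r \<and> p y = x)"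
  shows "\<exists>cs. is_cycle E cs"
proof -
  have "x \<in> V" "y \<in> V" "x \<noteq> y"
    using edge_in_V edge_irrefl xy by blast+
  define meets where "meets k \<longleftrightarrow> (\<exists>m\<le>dep y. (p ^^ k) x = (p ^^ m) y)" for k
  have "meets (dep x)"
    unfolding meets_def using ancestor_root \<open>x \<in> V\<close> \<open>y \<in> V\<close> by auto
  define k where "k = (LEAST k. meets k)"
  have "meets k" "k \<le> dep x" and first_meet: "\<And>i. i < k \<Longrightarrow> \<not> meets i"
    unfolding k_def using \<open>meets (dep x)\<close> by (auto intro: LeastI Least_le dest: not_less_Least)
  then obtain m where "m \<le> dep y" and km: "(p ^^ k) x = (p ^^ m) y"
    unfolding meets_def by blast
  have "2 \<le> k + m"
  proof (rule ccontr)
    assume "\<not> 2 \<le> k + m"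
    then consider "k = 0" "m = 0" | "k = 0" "m = 1" | "k = 1" "m = 0"
      by linarith
    then show False
    proof cases
      case 1
      then show False using km \<open>x \<noteq> y\<close> by simp
    next
      case 2
      then show False using km not_parent(2) \<open>m \<le> dep y\<close> dep_eq_0_iff[OF \<open>y \<in> V\<close>] by auto
    next
      case 3
      then show False using km not_parent(1) \<open>k \<le> dep x\<close> dep_eq_0_iff[OF \<open>x \<in> V\<close>] by auto
    qed
  qed
  moreover have "inj_on (ancestor_path p x y k m) {0..<Suc (k + m)}"
    using ancestor_path_inj[OF \<open>x \<in> V\<close> \<open>y \<in> V\<close> \<open>k \<le> dep x\<close> \<open>m \<le> dep y\<close> km] first_meet
    unfolding meets_def by blast
  moreover have "ancestor_path p x y k m 0 = x" "ancestor_path p x y k m (k + m) = y"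
    unfolding ancestor_path_def using km by auto
  ultimately have "is_cycle E (map (ancestor_path p x y k m) [0..<Suc (k + m)])"
    using ancestor_path_edge[OF \<open>x \<in> V\<close> \<open>y \<in> V\<close> \<open>k \<le> dep x\<close> \<open>m \<le> dep y\<close> km]
      edge_sym[OF xy] by (intro is_cycle_map_upt) auto
  then show ?thesis
    by blast
qed

end

lemma gdist_le: "(E ^^ n) r x \<Longrightarrow> gdist E r x \<le> n"
  unfolding gdist_def by (rule Least_le)

lemma gdist_walk:
  assumes "connected_graph V E" "r \<in> V" "x \<in> V"
  shows "(E ^^ gdist E r x) r x"
proof -
  obtain n where "(E ^^ n) r x"
    using assms rtranclp_imp_relpowp unfolding connected_graph_def by metis
  then show ?thesis
    unfolding gdist_def by (rule LeastI)
qed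

lemma tree_rooted_layering:
  assumes "is_tree V E" "r \<in> V"
  shows "\<exists>p. rooted_layering V E r p (gdist E r)"
proof -
  have simple: "simple_graph V E" and conn: "connected_graph V E"
    using assms(1) unfolding is_tree_def by blast+
  have dist_0: "gdist E r x = 0 \<longleftrightarrow> x = r" if "x \<in> V" for x
    using gdist_walk[OF conn assms(2) that] gdist_le[of 0 E r x] by auto
  have "\<exists>y. E x y \<and> gdist E r x = Suc (gdist E r y)" if x: "x \<in> V" "x \<noteq> r" for x
  proof -
    obtain k where k: "gdist E r x = Suc k"
      using dist_0[OF x(1)] x(2) by (cases "gdist E r x") auto
    then obtain y where "(E ^^ k) r y" "E y x"
      using gdist_walk[OF conn assms(2) \<open>x \<in> V\<close>] by (metis relpowp_Suc_E)
    have "y \<in> V"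
      using simple_graph_edgeD(1)[OF simple \<open>E y x\<close>] .
    have "gdist E r y \<le> k"
      using gdist_le \<open>(E ^^ k) r y\<close> .
    moreover have "gdist E r x \<le> Suc (gdist E r y)"
      using relpowp_Suc_I[OF gdist_walk[OF conn assms(2) \<open>y \<in> V\<close>] \<open>E y x\<close>] by (rule gdist_le)
    ultimately show ?thesis
      using k simple_graph_edgeD(4)[OF simple \<open>E y x\<close>] by auto
  qed
  then obtain p where "\<And>x. x \<in> V \<Longrightarrow> x \<noteq> r \<Longrightarrow> E x (p x) \<and> gdist E r x = Suc (gdist E r (p x))"
    by metis
  then show ?thesis
    unfolding rooted_layering_def using simple dist_0 by blast
qed

locale rooted_tree = rooted_layering +
  assumes finite_V: "finite V"
    and edge_parent: "\<And>x y. E x y \<Longrightarrow> (x \<noteq> r \<and> p x = y) \<or> (y \<noteq> r \<and> p y = x)"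

lemma tree_rooted_tree:
  assumes "is_tree V E" "r \<in> V"
  shows "\<exists>p. rooted_tree V E r p (gdist E r)"
proof -
  obtain p where layering: "rooted_layering V E r p (gdist E r)"
    using tree_rooted_layering[OF assms] by blast
  have "finite V" "\<nexists>cs. is_cycle E cs"
    using assms(1) unfolding is_tree_def by blast+
  then have "rooted_tree V E r p (gdist E r)"
    using rooted_layering.edge_parent_or_cycle[OF layering]
    by (intro rooted_tree.intro layering rooted_tree_axioms.intro) blast+
  then show ?thesis
    by blast
qed

context rooted_tree
begin

lemma edge_child:
  assumes "E x y" "x = r \<or> p x \<noteq> y"
  shows "y \<noteq> r \<and> p y = x"
  using edge_parent[OF assms(1)] assms(2) by blast

definition alg_invariant :: "'a set \<Rightarrow> bool" where
  "alg_invariant S \<longleftrightarrow> dominating V E S \<and> (\<forall>x \<in> S - crit V E S. x \<noteq> r \<and> p x \<notin> S)"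

definition height_profile :: "'a set \<Rightarrow> nat multiset" where
  "height_profile S = image_mset (\<lambda>x. Max (dep ` V) - dep x) (mset_set S)"

lemma alg_invariant_dominating: "alg_invariant S \<Longrightarrow> dominating V E S"
  unfolding alg_invariant_def by blast

lemma alg_invariant_subset: "alg_invariant S \<Longrightarrow> S \<subseteq> V"
  using alg_invariant_dominating unfolding dominating_def by blast

context
  fixes S A :: "'a set"
  assumes inv: "alg_invariant S" and A_a1: "A \<subseteq> a1 V E S"
    and A_parent: "\<And>a. a \<in> A \<Longrightarrow> a = r \<or> p a \<in> S - A"
begin

lemma exchanged_subset: "A \<subseteq> S"
  using A_a1 a1_subset[of V E S] by blast

lemma child_of_exchanged:
  assumes "a \<in> A" "E y a" "y \<notin> S"
  shows "y \<noteq> r \<and> p y = a"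
proof -
  have "a = r \<or> p a \<noteq> y"
    using A_parent[OF assms(1)] assms(3) by blast
  then show ?thesis
    using edge_child edge_sym[OF assms(2)] by blast
qed

lemma N1_adj_parent:
  assumes "w \<in> N1_adj V E S A"
  shows "w \<noteq> r" "p w \<in> A" "cnbhd E w \<inter> S = {p w}"
proof -
  obtain a z where "a \<in> A" "E w a" "w \<in> V" "w \<notin> S" and z: "cnbhd E w \<inter> S = {z}"
    using assms unfolding N1_adj_def N1_iff by blast
  moreover from this have "w \<noteq> r" "p w = a"
    using child_of_exchanged by blast+
  moreover have "a = z"
    using cnbhd_Int_eq_singletonD(3)[OF z] \<open>a \<in> A\<close> \<open>E w a\<close> exchanged_subset by blast
  ultimately show "w \<noteq> r" "p w \<in> A" "cnbhd E w \<inter> S = {p w}"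
    by simp_all
qed

lemma N1_adj_no_edge_to_kept:
  assumes "w \<in> N1_adj V E S A" "x \<in> S - A"
  shows "\<not> E w x"
  using cnbhd_Int_eq_singletonD(3)[OF N1_adj_parent(3)[OF assms(1)]] N1_adj_parent(2)[OF assms(1)] assms(2)
  by blast

lemma N1_adj_if_only_exchanged_neighbours:
  assumes "y \<in> V" "y \<notin> S" "s \<in> A" "E y s" "\<forall>s'\<in>S - A. \<not> E y s'"
  shows "y \<in> N1_adj V E S A"
proof -
  have "s \<in> S"
    using assms(3) exchanged_subset by blast
  have "cnbhd E y \<inter> S = {s}"
  proof (rule cnbhd_Int_eq_singletonI)
    fix w assume "w \<in> S" "w = y \<or> E y w"
    then have "E y w" "w \<in> A"
      using assms(2,5) by blast+
    then show "w = s"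
      using child_of_exchanged assms(2-4) by metis
  qed (use \<open>s \<in> S\<close> assms(4) in blast)+
  then show ?thesis
    unfolding N1_adj_def N1_iff using assms(1-4) by blast
qed

lemma exchange_dominating: "dominating V E (exchange V E S A)"
proof -
  have "y \<in> exchange V E S A \<or> (\<exists>s\<in>exchange V E S A. E y s)" if "y \<in> V" for y
  proof (cases "y \<in> S")
    case True
    show ?thesis
    proof (cases "y \<in> A")
      case True
      then obtain w where "w \<in> N1 V E S" "E y w"
        using A_a1 a1_iff[OF simple] by blast
      then have "w \<in> N1_adj V E S A"
        unfolding N1_adj_def using \<open>y \<in> A\<close> edge_sym by blast
      then show ?thesis
        using \<open>E y w\<close> unfolding exchange_def by blast
    next
      case False
      then show ?thesis
        using \<open>y \<in> S\<close> unfolding exchange_def by blast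
    qed
  next
    case False
    obtain s where "s \<in> S" "E y s"
      using alg_invariant_dominating[OF inv] \<open>y \<in> V\<close> False unfolding dominating_def by blast
    then have "(\<exists>s'\<in>S - A. E y s') \<or> y \<in> N1_adj V E S A"
      using N1_adj_if_only_exchanged_neighbours[OF \<open>y \<in> V\<close> False _ \<open>E y s\<close>] by blast
    then show ?thesis
      unfolding exchange_def by blast
  qed
  moreover have "exchange V E S A \<subseteq> V"
    using alg_invariant_subset[OF inv] unfolding exchange_def N1_adj_def N1_iff by blast
  ultimately show ?thesis
    unfolding dominating_def by blast
qed

lemma card_le_card_exchange: "card S \<le> card (exchange V E S A)"
proof -
  have "finite S" "finite (N1_adj V E S A)"
    using alg_invariant_subset[OF inv] finite_V finite_subset unfolding N1_adj_def N1_def by auto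
  then have "card (exchange V E S A) = card (S - A) + card (N1_adj V E S A)"
    unfolding exchange_def using N1_adj_disjoint[of V E S A] by (intro card_Un_disjoint) auto
  moreover have "card S = card (S - A) + card A"
    using \<open>finite S\<close> exchanged_subset card_Diff_subset card_mono
    by (metis finite_subset le_add_diff_inverse2)
  moreover have "card A \<le> card (N1_adj V E S A)"
    by (rule card_a1_le_card_N1_adj[OF simple finite_V A_a1])
  ultimately show ?thesis
    by linarith
qed

lemma N1_adj_isolated:
  assumes "w \<in> N1_adj V E S A"
  shows "cnbhd E w \<inter> exchange V E S A = {w}"
proof (rule cnbhd_Int_eq_singletonI)
  fix s assume s: "s \<in> exchange V E S A" "s = w \<or> E w s"
  show "s = w"
  proof (rule ccontr)
    assume "s \<noteq> w"
    with s(2) have "E w s"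
      by blast
    show False
    proof (cases "s \<in> S")
      case True
      then have "s \<in> S - A"
        using s(1) N1_adj_disjoint[of V E S A] unfolding exchange_def by blast
      then show False
        using N1_adj_no_edge_to_kept[OF assms] \<open>E w s\<close> by blast
    next
      case False
      then have "p s \<in> A" "p w \<in> A" "w \<notin> S"
        using s(1) assms N1_adj_parent(2) N1_adj_disjoint[of V E S A] unfolding exchange_def by blast+
      then show False
        using edge_parent[OF \<open>E w s\<close>] False exchanged_subset by blast
    qed
  qed
qed (use assms in \<open>auto simp: exchange_def\<close>)

lemma exchange_parent_of_lost_crit:
  assumes "x \<in> crit V E S" "x \<in> S - A" "x \<notin> crit V E (exchange V E S A)"
  shows "x \<noteq> r \<and> p x \<notin> exchange V E S A"
proof -
  let ?S' = "exchange V E S A"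
  obtain y where "y \<in> V" and y: "cnbhd E y \<inter> S = {x}"
    using crit_imp_private_neighbour[OF alg_invariant_dominating[OF inv] assms(1)] by blast
  have "x \<in> ?S'" "x = y \<or> E y x"
    using assms(2) cnbhd_Int_eq_singletonD(2)[OF y] unfolding exchange_def by blast+
  moreover have "cnbhd E y \<inter> ?S' \<noteq> {x}"
    using private_neighbour_imp_crit[OF \<open>y \<in> V\<close>] assms(3) by blast
  ultimately obtain w where "w \<in> ?S'" "w \<noteq> x" "w = y \<or> E y w"
    using cnbhd_Int_eq_singletonI by metis
  \<comment> \<open>The private neighbour \<open>y\<close> of \<open>x\<close> is now also dominated by a new vertex \<open>w\<close>, a child
    of \<open>y\<close>; hence \<open>y\<close> is the parent of \<open>x\<close> and lies outside the new set.\<close>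
  then have "w \<notin> S"
    using cnbhd_Int_eq_singletonD(3)[OF y] by blast
  then have w: "w \<in> N1_adj V E S A"
    using \<open>w \<in> ?S'\<close> unfolding exchange_def by blast
  have "y \<noteq> w"
    using N1_adj_no_edge_to_kept[OF w assms(2)] \<open>x = y \<or> E y x\<close> \<open>w \<noteq> x\<close> by blast
  then have "E y w"
    using \<open>w = y \<or> E y w\<close> by blast
  have "y \<notin> S"
  proof
    assume "y \<in> S"
    then have "y = x"
      using cnbhd_Int_eq_singletonD(3)[OF y] by blast
    then show False
      using N1_adj_no_edge_to_kept[OF w assms(2)] edge_sym[OF \<open>E y w\<close>] by blast
  qed
  then have "p y = w"
    using edge_parent[OF \<open>E y w\<close>] N1_adj_parent(2)[OF w] exchanged_subset by blast
  have "E y x"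
    using \<open>x = y \<or> E y x\<close> \<open>y \<notin> S\<close> assms(2) by blast
  then have "x \<noteq> r" "p x = y"
    using edge_parent \<open>p y = w\<close> \<open>w \<noteq> x\<close> by blast+
  moreover have "y \<notin> N1_adj V E S A"
    using N1_adj_parent(2) \<open>p y = w\<close> \<open>w \<notin> S\<close> exchanged_subset by blast
  ultimately show ?thesis
    using \<open>y \<notin> S\<close> unfolding exchange_def by blast
qed

lemma alg_invariant_exchange: "alg_invariant (exchange V E S A)"
proof -
  have "x \<noteq> r \<and> p x \<notin> exchange V E S A" if x: "x \<in> exchange V E S A - crit V E (exchange V E S A)" for x
  proof -
    have "x \<notin> N1_adj V E S A"
    proof
      assume new: "x \<in> N1_adj V E S A"
      then have "x \<in> V"
        unfolding N1_adj_def N1_iff by blast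
      then have "x \<in> crit V E (exchange V E S A)"
        using N1_adj_isolated[OF new] by (rule private_neighbour_imp_crit)
      then show False
        using x by blast
    qed
    then have "x \<in> S - A"
      using x unfolding exchange_def by blast
    show ?thesis
    proof (cases "x \<in> crit V E S")
      case True
      then show ?thesis
        using exchange_parent_of_lost_crit \<open>x \<in> S - A\<close> x by blast
    next
      case False
      then have "x \<noteq> r" "p x \<notin> S"
        using inv \<open>x \<in> S - A\<close> unfolding alg_invariant_def by blast+
      moreover have "E (p x) x"
        using parent_edge[of x] edge_sym \<open>x \<noteq> r\<close> \<open>x \<in> S - A\<close> alg_invariant_subset[OF inv] by blast
      then have "p x \<notin> N1_adj V E S A"
        using N1_adj_no_edge_to_kept \<open>x \<in> S - A\<close> by blast
      ultimately show ?thesis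
        unfolding exchange_def by blast
    qed
  qed
  then show ?thesis
    unfolding alg_invariant_def using exchange_dominating by blast
qed

lemma height_profile_exchange_less:
  assumes "A \<noteq> {}"
  shows "height_profile (exchange V E S A) < height_profile S"
proof -
  let ?N = "N1_adj V E S A" and ?h = "\<lambda>x. Max (dep ` V) - dep x"
  have "finite S" "?N \<subseteq> V"
    using alg_invariant_subset[OF inv] finite_V finite_subset unfolding N1_adj_def N1_iff by blast+
  then have fin: "finite (S - A)" "finite A" "finite ?N"
    using exchanged_subset finite_V finite_subset by blast+
  have "(S - A) \<union> A = S" "(S - A) \<inter> A = {}"
    using exchanged_subset by blast+
  then have "height_profile S = height_profile (S - A) + height_profile A"
    using mset_set_Union[OF fin(1,2)] unfolding height_profile_def by simp
  moreover have "(S - A) \<inter> ?N = {}"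
    using N1_adj_disjoint[of V E S A] by blast
  then have "height_profile (exchange V E S A) = height_profile (S - A) + height_profile ?N"
    using mset_set_Union[OF fin(1,3)] unfolding height_profile_def exchange_def by simp
  moreover have "height_profile A \<noteq> {#}"
    using assms fin(2) unfolding height_profile_def by (simp add: mset_set_empty_iff)
  moreover have "\<exists>j\<in>#height_profile A. k < j" if k: "k \<in># height_profile ?N" for k
  proof -
    obtain w where w: "w \<in> ?N" "k = ?h w"
      using k fin(3) unfolding height_profile_def by auto
    then have "w \<in> V" "p w \<in> A"
      using N1_adj_parent(2) unfolding N1_adj_def N1_iff by blast+
    moreover have "dep w = Suc (dep (p w))"
      using dep_parent \<open>w \<in> V\<close> N1_adj_parent(1)[OF w(1)] by blast
    moreover have "dep w \<le> Max (dep ` V)"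
      using finite_V \<open>w \<in> V\<close> by simp
    ultimately show ?thesis
      using w(2) fin(2) unfolding height_profile_def by force
  qed
  ultimately show ?thesis
    unfolding less_multiset_def by (simp add: one_step_implies_multp)
qed

end

lemma supported_neighbour_a1_child:
  assumes inv: "alg_invariant S" and u: "u \<in> S - crit V E S" and "c \<in> S" "E u c"
  shows "c \<in> a1 V E S \<and> p c = u"
proof -
  have "u \<noteq> r" "p u \<notin> S" "dominating V E S"
    using inv u unfolding alg_invariant_def by blast+
  then have "p c = u"
    using edge_child[OF \<open>E u c\<close>] \<open>c \<in> S\<close> by blast
  then have "c \<in> crit V E S"
    using inv \<open>c \<in> S\<close> u unfolding alg_invariant_def by blast
  then show ?thesis
    using crit_adjacent_imp_a1[OF simple \<open>dominating V E S\<close>] edge_sym[OF \<open>E u c\<close>] u \<open>p c = u\<close>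
    by blast
qed

lemma alg_step_exchange:
  assumes inv: "alg_invariant S" and step: "alg_step V E r S S'"
  obtains A where "A \<noteq> {}" "A \<subseteq> a1 V E S" "\<And>a. a \<in> A \<Longrightarrow> a = r \<or> p a \<in> S - A"
    "S' = exchange V E S A"
proof -
  obtain u where u: "u \<in> S - crit V E S" and
    "S' = (S - {a \<in> a1 V E S. E a u}) \<union> {w \<in> N1 V E S. \<exists>a\<in>{a \<in> a1 V E S. E a u}. E w a}"
    using step unfolding alg_step_def Let_def by blast
  let ?A = "{a \<in> a1 V E S. E a u}"
  have S': "S' = exchange V E S ?A"
    unfolding exchange_def N1_adj_def by fact
  have "dominating V E S"
    using alg_invariant_dominating[OF inv] .
  obtain s where "s \<in> S" "E u s"
    by (rule supported_has_neighbour[OF \<open>dominating V E S\<close> u])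
  then have "s \<in> ?A"
    using supported_neighbour_a1_child[OF inv u] edge_sym by blast
  then have nonempty: "?A \<noteq> {}"
    by blast
  have parent: "a = r \<or> p a \<in> S - ?A" if "a \<in> ?A" for a
  proof -
    have "a \<in> S"
      using that unfolding a1_def crit_def by blast
    then have "p a = u"
      using supported_neighbour_a1_child[OF inv u] edge_sym that by blast
    then show ?thesis
      using u unfolding a1_def by blast
  qed
  show thesis
    by (rule that[OF nonempty _ parent S']) blast
qed

lemma alg_step_invariant:
  assumes "alg_invariant S" "alg_step V E r S S'"
  shows "alg_invariant S'" "card S \<le> card S'" "height_profile S' < height_profile S"
proof -
  obtain A where A: "A \<noteq> {}" "A \<subseteq> a1 V E S" "\<And>a. a \<in> A \<Longrightarrow> a = r \<or> p a \<in> S - A"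
    and S': "S' = exchange V E S A"
    using alg_step_exchange[OF assms] by blast
  show "alg_invariant S'" "card S \<le> card S'" "height_profile S' < height_profile S"
    unfolding S' using alg_invariant_exchange[OF assms(1) A(2,3)]
      card_le_card_exchange[OF assms(1) A(2,3)] height_profile_exchange_less[OF assms(1) A(2,3,1)]
    by blast+
qed

lemma alg_no_infinite_run:
  assumes "alg_invariant S"
  shows "\<nexists>f. f 0 = S \<and> (\<forall>i. alg_step V E r (f i) (f (Suc i)))"
proof
  assume "\<exists>f. f 0 = S \<and> (\<forall>i. alg_step V E r (f i) (f (Suc i)))"
  then obtain f where "f 0 = S" and run: "\<And>i. alg_step V E r (f i) (f (Suc i))"
    by blast
  have inv: "alg_invariant (f i)" for i
  proof (induction i)
    case 0
    then show ?case
      using assms \<open>f 0 = S\<close> by simp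
  next
    case (Suc i)
    then show ?case
      using alg_step_invariant(1) run by blast
  qed
  have "wf {(M, N :: nat multiset). M < N}"
    using wfp_less_multiset[OF wfp_on_less] by (simp add: wfp_def)
  then obtain i where "(height_profile (f (Suc i)), height_profile (f i)) \<notin> {(M, N). M < N}"
    by (rule wf_no_infinite_down_chainE)
  then show False
    using alg_step_invariant(3)[OF inv run] by simp
qed

lemma alg_reachable_invariant:
  assumes "alg_invariant S" "(alg_step V E r)\<^sup>*\<^sup>* S S'"
  shows "alg_invariant S' \<and> card S \<le> card S'"
  using assms(2)
proof (induction rule: rtranclp_induct)
  case base
  then show ?case
    using assms(1) by simp
next
  case (step S' S'')
  then have "alg_invariant S''" "card S' \<le> card S''"
    using alg_step_invariant(1,2) by blast+
  then show ?case
    using step.IH by simp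
qed

lemma alg_step_exists:
  assumes "alg_invariant S" "\<not> minimal_dominating V E S"
  shows "\<exists>S'. alg_step V E r S S'"
proof -
  have "dominating V E S"
    using alg_invariant_dominating[OF assms(1)] .
  then obtain x where "x \<in> S - crit V E S"
    using not_minimal_imp_supported assms(2) by blast
  then have "\<exists>u. u \<in> S - crit V E S \<and> (\<forall>u'. u' \<in> S - crit V E S \<longrightarrow> gdist E r u \<le> gdist E r u')"
    by (rule ex_has_least_nat)
  then obtain u where "u \<in> S - crit V E S"
      "\<forall>u'. u' \<in> S - crit V E S \<longrightarrow> gdist E r u \<le> gdist E r u'"
    by blast
  then have "alg_step V E r S (exchange V E S {a \<in> a1 V E S. E a u})"
    unfolding alg_step_def Let_def exchange_def N1_adj_def using assms(2) by blast
  then show ?thesis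
    by blast
qed

lemma alg_invariant_initial:
  assumes "minimal_dominating V E M" "r \<in> a1 V E M"
  shows "alg_invariant (exchange V E M {r})" "card M \<le> card (exchange V E M {r})"
proof -
  have inv: "alg_invariant M"
    using assms(1) minimal_dominating_crit unfolding alg_invariant_def minimal_dominating_def
    by blast
  have "{r} \<subseteq> a1 V E M" "\<And>a. a \<in> {r} \<Longrightarrow> a = r \<or> p a \<in> M - {r}"
    using assms(2) by blast+
  then show "alg_invariant (exchange V E M {r})" "card M \<le> card (exchange V E M {r})"
    using alg_invariant_exchange[OF inv] card_le_card_exchange[OF inv] by blast+
qed

end

theorem theorem4p5:
  fixes V :: "'a set" and E :: "'a \<Rightarrow> 'a \<Rightarrow> bool" and M :: "'a set" and v :: 'a
  assumes "is_tree V E"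
    and "minimal_dominating V E M"
    and "v \<in> a1 V E M"
  defines "M0 \<equiv> (M - {v}) \<union> (cnbhd E v \<inter> N1 V E M)"
  shows "card M \<le> card M0
    \<and> (\<nexists>f. f 0 = M0 \<and> (\<forall>i. alg_step V E v (f i) (f (Suc i))))
    \<and> (\<forall>M'. (alg_step V E v)\<^sup>*\<^sup>* M0 M' \<longrightarrow>
          (minimal_dominating V E M' \<and> card M0 \<le> card M') \<or> (\<exists>M''. alg_step V E v M' M''))"
proof -
  have "v \<in> M"
    using assms(3) unfolding a1_def crit_def by blast
  then have "v \<in> V"
    using assms(2) unfolding minimal_dominating_def dominating_def by blast
  then obtain p where "rooted_tree V E v p (gdist E v)"
    using tree_rooted_tree[OF assms(1)] by blast
  then interpret rooted_tree V E v p "gdist E v" .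
  have "M0 = exchange V E M {v}"
    unfolding M0_def using exchange_singleton[OF simple \<open>v \<in> M\<close>] by simp
  then have start: "alg_invariant M0" "card M \<le> card M0"
    using alg_invariant_initial[OF assms(2,3)] by simp_all
  have "(minimal_dominating V E M' \<and> card M0 \<le> card M') \<or> (\<exists>M''. alg_step V E v M' M'')"
    if "(alg_step V E v)\<^sup>*\<^sup>* M0 M'" for M'
    using alg_reachable_invariant[OF start(1) that] alg_step_exists by blast
  then show ?thesis
    using start alg_no_infinite_run[OF start(1)] by blast
qed

end
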